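(* Let $\mathcal{H}_S$ (system) and $\mathcal{H}_B$ (bath) be finite-dimensional Hilbert spaces, and fix a final time $T>0$. Let $t\mapsto \overline{H}_S(t)$ be a continuous family of Hermitian operators on $\mathcal{H}_S$, $H_B$ a Hermitian operator on $\mathcal{H}_B$, and $H_0(t)=\overline{H}_S(t)\otimes I+I\otimes H_B$. Let $H_{\mathrm{p}}$ be a time-independent Hermitian operator on $\mathcal{H}_S$ with spectral decomposition $H_{\mathrm{p}}=\sum_a\lambda_a\Pi_a$ (distinct eigenvalues $\lambda_a$, spectral projectors $\Pi_a$), let $E_{\mathrm{p}}>0$, and let $V$ be a time-independent Hermitian operator on $\mathcal{H}_S\otimes\mathcal{H}_B$. Let $\mathcal{I}$ be a set of indices of eigenvalues of $H_{\mathrm{p}}$, and set $$P=\sum_{a\in\mathcal{I}}\Pi_a,\qquad W=\sum_{a\in\mathcal{I}}\Pi_a V\Pi_a.$$ Assume that $[\overline{H}_S(t),P]=[\overline{H}_S(t),H_{\mathrm{p}}]=0$ for all $t\in[0,T]$. Let $U_V(T)$ and $U_W(T)$ be the unitary evolutions at time $T$ (solutions of $i\,\frac{d}{dt}U=H(t)U$, $U(0)=I$) generated by $H_V(t)=H_0(t)+E_{\mathrm{p}}H_{\mathrm{p}}+V$ and $H_W(t)=H_0(t)+E_{\mathrm{p}}H_{\mathrm{p}}+W$ respectively, i.e. $U_W(T)=\mathcal{T}\exp\left(-i\int_0^T(H_0(t)+E_{\mathrm{p}}H_{\mathrm{p}}+W)\,dt\right)$. Then for any unitarily invariant norm $\|\cdot\|$,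 $$\lim_{E_{\mathrm{p}}\to\infty}\big\|U_V(T)P-U_W(T)P\big\|=0.$$
   Context: All operators on $\mathcal{H}_S$ or $\mathcal{H}_B$ are regarded as operators on $\mathcal{H}_S\otimes\mathcal{H}_B$ by tensoring with the identity. $\mathcal{T}$ denotes time ordering. A norm is unitarily invariant if $\|UXV\|=\|X\|$ for all unitaries $U,V$. *)

theory Defs
  imports "HOL-Analysis.Analysis"
begin

text \<open>Finite-dimensional Hilbert spaces are modelled as complex^'n for a finite
index type 'n; operators are square matrices complex^'n^'n.  The tensor product
H_S (x) H_B is complex^('s \<times> 'b).\<close>

type_synonym 'n cmat = "complex^'n^'n"

definition cadj :: "'n::finite cmat \<Rightarrow> 'n cmat" where
  "cadj A = (\<chi> i j. cnj (A $ j $ i))"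

definition hermitian :: "'n::finite cmat \<Rightarrow> bool" where
  "hermitian A \<longleftrightarrow> cadj A = A"

definition unitary :: "'n::finite cmat \<Rightarrow> bool" where
  "unitary U \<longleftrightarrow> U ** cadj U = mat 1 \<and> cadj U ** U = mat 1"

definition kron :: "'s::finite cmat \<Rightarrow> 'b::finite cmat \<Rightarrow> ('s \<times> 'b) cmat" where
  "kron A B = (\<chi> p q. A $ fst p $ fst q * B $ snd p $ snd q)"

definition liftS :: "'s::finite cmat \<Rightarrow> ('s \<times> 'b::finite) cmat" where
  "liftS A = kron A (mat 1)"

definition liftB :: "'b::finite cmat \<Rightarrow> ('s::finite \<times> 'b) cmat" where
  "liftB B = kron (mat 1) B"

definition commute :: "'n::finite cmat \<Rightarrow> 'n cmat \<Rightarrow> bool" where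
  "commute A B \<longleftrightarrow> A ** B = B ** A"

text \<open>A (complex) matrix norm that is unitarily invariant.  Scalar multiplication
by c is written as left multiplication by the diagonal matrix mat c.\<close>
definition unitarily_invariant_norm :: "('n::finite cmat \<Rightarrow> real) \<Rightarrow> bool" where
  "unitarily_invariant_norm N \<longleftrightarrow>
     (\<forall>X. N X = 0 \<longleftrightarrow> X = 0) \<and>
     (\<forall>X Y. N (X + Y) \<le> N X + N Y) \<and>
     (\<forall>c X. N (mat c ** X) = cmod c * N X) \<and>
     (\<forall>U X V. unitary U \<longrightarrow> unitary V \<longrightarrow> N (U ** X ** V) = N X)"

definition evolution :: "real \<Rightarrow> (real \<Rightarrow> 'n::finite cmat) \<Rightarrow> (real \<Rightarrow> 'n cmat) \<Rightarrow> bool" where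
  "evolution T H U \<longleftrightarrow> U 0 = mat 1 \<and>
     (\<forall>t\<in>{0..T}. (U has_vector_derivative (mat (- \<i>) ** (H t ** U t))) (at t within {0..T}))"

end

theory Submission
  imports Defs
begin

text \<open>
  Pass to the interaction picture \<open>D(t) = U_V(t)\<^sup>* U_W(t) P\<close>. As \<open>H_W\<close> commutes with
  \<open>P\<close>, so does the evolution it generates, and \<open>D' = i U_V\<^sup>* (V - W) U_W P\<close> with
  \<open>(V - W) P = \<Sum> \<Pi>\<^sub>b V \<Pi>\<^sub>a\<close> over \<open>a \<in> \<I>\<close>, \<open>b \<noteq> a\<close>. Each block \<open>M = \<Pi>\<^sub>b V \<Pi>\<^sub>a\<close> satisfies
  \<open>H_V M - M H_W = E\<^sub>p (\<lambda>\<^sub>b - \<lambda>\<^sub>a) M + R\<close> with \<open>R\<close> bounded independently of \<open>E\<^sub>p\<close>, so up to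
  \<open>O(1 / E\<^sub>p)\<close> the integrand \<open>U_V\<^sup>* M U_W P\<close> is the derivative of
  \<open>U_V\<^sup>* M U_W P / (i E\<^sub>p (\<lambda>\<^sub>b - \<lambda>\<^sub>a))\<close>.
  Integrating by parts gives \<open>\<parallel>U_V(T) P - U_W(T) P\<parallel> = O(1 / E\<^sub>p)\<close> in the Frobenius norm, and
  in finite dimension any norm is dominated by a multiple of the Frobenius norm.
\<close>

lemma bounded_bilinear_matrix_mult:
  "bounded_bilinear ((**) :: 'n::finite cmat \<Rightarrow> 'n cmat \<Rightarrow> 'n cmat)"
  by (rule bilinear_conv_bounded_bilinear[THEN iffD1])
     (auto simp: bilinear_def intro!: linearI simp: matrix_add_ldistrib scalar_matrix_assoc matrix_scalar_ac,
      vector matrix_matrix_mult_def sum.distrib[symmetric] field_simps)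

interpretation matrix_mult: bounded_bilinear "(**) :: 'n::finite cmat \<Rightarrow> 'n cmat \<Rightarrow> 'n cmat"
  by (rule bounded_bilinear_matrix_mult)

lemma mat_mult_eq: "mat c ** A = (\<chi> i j. c * A $ i $ j)"
  by (simp add: matrix_matrix_mult_def mat_def vec_eq_iff if_distrib if_distribR cong: if_cong)

lemma mult_mat_commute: "(A :: 'n::finite cmat) ** mat c = mat c ** A"
  by (simp add: mat_mult_eq matrix_matrix_mult_def mat_def vec_eq_iff if_distrib if_distribR
      mult.commute cong: if_cong)

lemma mult_mat_left_commute: "(A :: 'n::finite cmat) ** (mat c ** B) = mat c ** (A ** B)"
  by (metis mult_mat_commute matrix_mul_assoc)

lemma mat_mult_mat: "mat a ** mat b = (mat (a * b) :: 'n::finite cmat)"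
  by (subst mat_mult_eq) (simp add: vec_eq_iff mat_def)

lemma mat_uminus_mult: "mat (- c) ** A = - (mat c ** (A :: 'n::finite cmat))"
  by (simp add: mat_mult_eq vec_eq_iff)

lemma scaleR_eq_mat_mult: "r *\<^sub>R (A :: 'n::finite cmat) = mat (of_real r) ** A"
  by (simp add: mat_mult_eq vec_eq_iff scaleR_conv_of_real[where 'a=complex])

lemma cadj_mult: "cadj (A ** B) = cadj B ** cadj (A :: 'n::finite cmat)"
  by (simp add: cadj_def matrix_matrix_mult_def vec_eq_iff mult.commute)

lemma cadj_add: "cadj (A + B) = cadj A + cadj (B :: 'n::finite cmat)"
  by (simp add: cadj_def vec_eq_iff)

lemma cadj_minus: "cadj (- A) = - cadj (A :: 'n::finite cmat)"
  by (simp add: cadj_def vec_eq_iff)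

lemma cadj_scaleR: "cadj (r *\<^sub>R A) = r *\<^sub>R cadj (A :: 'n::finite cmat)"
  by (simp add: cadj_def vec_eq_iff scaleR_conv_of_real[where 'a=complex])

lemma cadj_mat: "cadj (mat c :: 'n::finite cmat) = mat (cnj c)"
  by (simp add: cadj_def vec_eq_iff mat_def)

lemma cadj_cadj: "cadj (cadj A) = (A :: 'n::finite cmat)"
  by (simp add: cadj_def vec_eq_iff)

lemma cadj_sum: "cadj (\<Sum>x\<in>S. f x) = (\<Sum>x\<in>S. cadj (f x) :: 'n::finite cmat)"
  by (induction S rule: infinite_finite_induct) (auto simp: cadj_add cadj_def vec_eq_iff)

lemma linear_cadj: "linear (cadj :: 'n::finite cmat \<Rightarrow> 'n cmat)"
  by (rule linearI) (simp_all add: cadj_add cadj_scaleR)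

lemma bounded_linear_cadj: "bounded_linear (cadj :: 'n::finite cmat \<Rightarrow> 'n cmat)"
  using linear_cadj linear_conv_bounded_linear by blast

lemma hermitian_add: "hermitian A \<Longrightarrow> hermitian B \<Longrightarrow> hermitian (A + B)"
  by (simp add: hermitian_def cadj_add)

lemma hermitian_scaleR: "hermitian A \<Longrightarrow> hermitian (r *\<^sub>R A)"
  by (simp add: hermitian_def cadj_scaleR)

lemma mult_diff_mult_eigen_shift:
  fixes A M :: "'n::finite cmat"
  assumes "A ** M = b *\<^sub>R M" and "M ** A = a *\<^sub>R M"
  shows "(K + E *\<^sub>R A + V1) ** M - M ** (K + E *\<^sub>R A + V2)
    = (E * (b - a)) *\<^sub>R M + ((K + V1) ** M - M ** (K + V2))"
proof -
  have "(K + E *\<^sub>R A + V1) ** M - M ** (K + E *\<^sub>R A + V2)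
      = E *\<^sub>R (b *\<^sub>R M - a *\<^sub>R M) + ((K + V1) ** M - M ** (K + V2))"
    using assms by (simp add: matrix_mult.add_left matrix_mult.add_right matrix_mult.scaleR_left
        matrix_mult.scaleR_right scaleR_diff_right)
  then show ?thesis
    by (simp only: scaleR_diff_left[symmetric] scaleR_scaleR)
qed

section \<open>The Frobenius norm\<close>

lemma norm_cmat_power2: "(norm (X :: 'n::finite cmat))\<^sup>2 = (\<Sum>i\<in>UNIV. \<Sum>j\<in>UNIV. (cmod (X $ i $ j))\<^sup>2)"
  by (simp add: norm_vec_def L2_set_def sum_nonneg)

lemma cadj_mult_self_diag: "(cadj X ** X) $ j $ j = of_real (\<Sum>i\<in>UNIV. (cmod (X $ i $ j))\<^sup>2)"
proof -
  have "(cadj X ** X) $ j $ j = (\<Sum>i\<in>UNIV. X $ i $ j * cnj (X $ i $ j))"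
    by (simp add: cadj_def matrix_matrix_mult_def mult.commute)
  then show ?thesis
    by (simp only: complex_norm_square of_real_sum)
qed

lemma norm_cmat_power2_trace: "(norm (X :: 'n::finite cmat))\<^sup>2 = (\<Sum>j\<in>UNIV. Re ((cadj X ** X) $ j $ j))"
  unfolding norm_cmat_power2 cadj_mult_self_diag Re_complex_of_real by (rule sum.swap)

lemma norm_unitary_mult:
  assumes "cadj U ** U = mat 1"
  shows "norm (U ** X) = norm (X :: 'n::finite cmat)"
proof -
  have "cadj (U ** X) ** (U ** X) = cadj X ** X"
    by (metis assms cadj_mult matrix_mul_assoc matrix_mul_lid)
  then have "(norm (U ** X))\<^sup>2 = (norm X)\<^sup>2"
    by (simp add: norm_cmat_power2_trace)
  then show ?thesis by simp
qed

lemma cadj_mult_self_eq_0: "cadj X ** X = 0 \<Longrightarrow> X = (0 :: 'n::finite cmat)"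
  using norm_cmat_power2_trace[of X] by simp

lemma norm_matrix_mult_le: "norm (A ** B) \<le> norm A * norm B" for A B :: "'n::finite cmat"
proof -
  let ?r = "\<lambda>i. \<Sum>k\<in>UNIV. (cmod (A $ i $ k))\<^sup>2" and ?c = "\<lambda>j. \<Sum>k\<in>UNIV. (cmod (B $ k $ j))\<^sup>2"
  have entry: "(cmod ((A ** B) $ i $ j))\<^sup>2 \<le> ?r i * ?c j" for i j
  proof -
    have "cmod ((A ** B) $ i $ j) \<le> (\<Sum>k\<in>UNIV. \<bar>cmod (A $ i $ k)\<bar> * \<bar>cmod (B $ k $ j)\<bar>)"
      unfolding matrix_matrix_mult_def by (auto intro: order_trans[OF norm_sum] simp: norm_mult)
    also have "\<dots> \<le> L2_set (\<lambda>k. cmod (A $ i $ k)) UNIV * L2_set (\<lambda>k. cmod (B $ k $ j)) UNIV"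
      by (rule L2_set_mult_ineq)
    finally have "(cmod ((A ** B) $ i $ j))\<^sup>2 \<le> (L2_set (\<lambda>k. cmod (A $ i $ k)) UNIV * L2_set (\<lambda>k. cmod (B $ k $ j)) UNIV)\<^sup>2"
      by (rule power_mono) simp
    then show ?thesis by (simp add: power_mult_distrib L2_set_def sum_nonneg)
  qed
  have "(norm (A ** B))\<^sup>2 \<le> (\<Sum>i\<in>UNIV. \<Sum>j\<in>UNIV. ?r i * ?c j)"
    unfolding norm_cmat_power2 by (intro sum_mono entry)
  also have "\<dots> = (\<Sum>i\<in>UNIV. ?r i) * (\<Sum>j\<in>UNIV. ?c j)"
    by (rule sum_product[symmetric])
  also have "\<dots> = (norm A * norm B)\<^sup>2"
    unfolding power_mult_distrib norm_cmat_power2 by (subst (2) sum.swap) (rule refl)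
  finally show ?thesis
    by (rule power2_le_imp_le) simp
qed

lemma norm_mat_i_mult: "norm (mat \<i> ** X) = norm (X :: 'n::finite cmat)"
  by (rule norm_unitary_mult) (simp add: cadj_mat mat_mult_mat)

lemma norm_cadj_unitary_mult: "U ** cadj U = mat 1 \<Longrightarrow> norm (cadj U ** X) = norm (X :: 'n::finite cmat)"
  by (rule norm_unitary_mult) (simp add: cadj_cadj)

lemma norm_unitary_mult_diff:
  assumes "unitary U"
  shows "norm (U ** X - Y) = norm (X - cadj U ** (Y :: 'n::finite cmat))"
proof -
  have "U ** X - Y = U ** (X - cadj U ** Y)"
    using assms by (simp add: unitary_def matrix_mult.diff_right matrix_mul_assoc)
  then show ?thesis
    using assms by (simp add: unitary_def norm_unitary_mult)
qed

lemma norm_commutator_le: "norm (A ** M - M ** B) \<le> (norm A + norm B) * norm (M :: 'n::finite cmat)"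
proof -
  have "norm (A ** M - M ** B) \<le> norm A * norm M + norm M * norm B"
    by (rule order_trans[OF norm_triangle_ineq4 add_mono[OF norm_matrix_mult_le norm_matrix_mult_le]])
  then show ?thesis
    by (simp add: distrib_right mult.commute[of "norm B"])
qed

lemma norm_sum_scaleR_inverse_le:
  fixes Y :: "'k \<Rightarrow> 'a::real_normed_vector"
  assumes "\<And>k. k \<in> K \<Longrightarrow> norm (Y k) \<le> c k"
  shows "norm (\<Sum>k\<in>K. (1 / \<omega> k) *\<^sub>R Y k) \<le> (\<Sum>k\<in>K. c k / \<bar>\<omega> k\<bar>)"
proof -
  have "norm (\<Sum>k\<in>K. (1 / \<omega> k) *\<^sub>R Y k) \<le> (\<Sum>k\<in>K. norm (Y k) / \<bar>\<omega> k\<bar>)"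
    by (rule order_trans[OF norm_sum]) simp
  also have "\<dots> \<le> (\<Sum>k\<in>K. c k / \<bar>\<omega> k\<bar>)"
    by (intro sum_mono divide_right_mono assms) simp_all
  finally show ?thesis .
qed

lemma norm_diff_le_of_vector_derivative:
  fixes f f' :: "real \<Rightarrow> 'a::real_normed_vector"
  assumes "a \<le> b"
    and "\<And>x. x \<in> {a..b} \<Longrightarrow> (f has_vector_derivative f' x) (at x within {a..b})"
    and "\<And>x. x \<in> {a..b} \<Longrightarrow> norm (f' x) \<le> B"
  shows "norm (f b - f a) \<le> B * (b - a)"
proof -
  have "norm (f b - f a) \<le> B * norm (b - a)"
  proof (rule differentiable_bound[of "{a..b}" f "\<lambda>x h. h *\<^sub>R f' x"])
    show "(f has_derivative (\<lambda>h. h *\<^sub>R f' x)) (at x within {a..b})" if "x \<in> {a..b}" for x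
      using assms(2)[OF that] by (simp add: has_vector_derivative_def)
    show "onorm (\<lambda>h. h *\<^sub>R f' x) \<le> B" if "x \<in> {a..b}" for x
      using assms(3)[OF that] onorm_id[where 'a=real]
      by (simp add: onorm_scaleR_left bounded_linear_ident id_def)
  qed (use assms(1) in auto)
  with assms(1) show ?thesis by simp
qed

section \<open>Unitary evolutions\<close>

lemma has_vector_derivative_evolution_sandwich:
  fixes U1 U2 H1 H2 :: "real \<Rightarrow> 'n::finite cmat" and C X :: "'n cmat"
  assumes d1: "(U1 has_vector_derivative mat (-\<i>) ** (H1 t ** U1 t)) (at t within S)"
    and d2: "(U2 has_vector_derivative mat (-\<i>) ** (H2 t ** U2 t)) (at t within S)"
    and "hermitian (H1 t)"
  shows "((\<lambda>s. cadj (U1 s) ** (C ** (U2 s ** X))) has_vector_derivative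
           mat \<i> ** (cadj (U1 t) ** ((H1 t ** C - C ** H2 t) ** (U2 t ** X)))) (at t within S)"
proof -
  have adj: "((\<lambda>s. cadj (U1 s)) has_vector_derivative cadj (mat (-\<i>) ** (H1 t ** U1 t))) (at t within S)"
    by (rule bounded_linear.has_vector_derivative[OF bounded_linear_cadj d1])
  have right: "((\<lambda>s. C ** (U2 s ** X)) has_vector_derivative C ** (mat (-\<i>) ** (H2 t ** U2 t) ** X))
      (at t within S)"
    using matrix_mult.has_vector_derivative[OF has_vector_derivative_const[of C]
        matrix_mult.has_vector_derivative[OF d2 has_vector_derivative_const[of X]]]
    by simp
  show ?thesis
    using matrix_mult.has_vector_derivative[OF adj right]
    by (rule has_vector_derivative_eq_rhs)
      (use assms(3) in \<open>simp add: hermitian_def cadj_mult cadj_mat matrix_mult.diff_left matrix_mult.diff_right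
          mult_mat_commute matrix_mul_assoc mat_mult_mat mat_uminus_mult matrix_mult.minus_left
          matrix_mult.minus_right cadj_minus\<close>)
qed

lemma cadj_mult_solutions_constant:
  fixes Y1 Y2 H :: "real \<Rightarrow> 'n::finite cmat"
  assumes "\<forall>t\<in>{0..T}. (Y1 has_vector_derivative mat (-\<i>) ** (H t ** Y1 t)) (at t within {0..T})"
    and "\<forall>t\<in>{0..T}. (Y2 has_vector_derivative mat (-\<i>) ** (H t ** Y2 t)) (at t within {0..T})"
    and "\<forall>t\<in>{0..T}. hermitian (H t)"
    and "t \<in> {0..T}"
  shows "cadj (Y1 t) ** Y2 t = cadj (Y1 0) ** Y2 0"
proof -
  have "((\<lambda>s. cadj (Y1 s) ** (mat 1 ** (Y2 s ** mat 1))) has_vector_derivative 0) (at s within {0..T})"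
    if "s \<in> {0..T}" for s
    using has_vector_derivative_evolution_sandwich[of Y1 H s "{0..T}" Y2 H "mat 1" "mat 1"] assms(1-3) that
    by simp
  then obtain c where "\<And>s. s \<in> {0..T} \<Longrightarrow> cadj (Y1 s) ** (mat 1 ** (Y2 s ** mat 1)) = c"
    using has_vector_derivative_zero_constant[OF convex_real_interval(5)] by blast
  with assms(4) show ?thesis by (metis atLeastAtMost_iff order_refl order_trans matrix_mul_lid matrix_mul_rid)
qed

lemma evolution_unitary:
  assumes "evolution T H U" and "\<forall>t\<in>{0..T}. hermitian (H t)" and "t \<in> {0..T}"
  shows "unitary (U t)"
proof -
  have "cadj (U t) ** U t = cadj (U 0) ** U 0"
    using assms by (intro cadj_mult_solutions_constant) (auto simp: evolution_def)
  then have "cadj (U t) ** U t = mat 1"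
    using assms(1) by (simp add: evolution_def cadj_mat)
  then show ?thesis
    unfolding unitary_def using matrix_left_right_inverse by blast
qed

lemma evolution_commuting_projection:
  assumes ev: "evolution T H U" and herm: "\<forall>t\<in>{0..T}. hermitian (H t)"
    and comm: "\<forall>t\<in>{0..T}. H t ** P = P ** H t" and idem: "P ** P = P" and t: "t \<in> {0..T}"
  shows "P ** (U t ** P) = U t ** P"
proof -
  define Y where "Y s = (mat 1 - P) ** (U s ** P)" for s
  have "(Y has_vector_derivative mat (-\<i>) ** (H s ** Y s)) (at s within {0..T})" if s: "s \<in> {0..T}" for s
  proof -
    have dU: "(U has_vector_derivative mat (-\<i>) ** (H s ** U s)) (at s within {0..T})"
      using ev s by (simp add: evolution_def)
    have "(Y has_vector_derivative (mat 1 - P) ** (mat (-\<i>) ** (H s ** U s) ** P)) (at s within {0..T})"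
      unfolding Y_def
      using matrix_mult.has_vector_derivative[OF has_vector_derivative_const[of "mat 1 - P"]
          matrix_mult.has_vector_derivative[OF dU has_vector_derivative_const[of P]]]
      by simp
    moreover have "(mat 1 - P) ** H s = H s ** (mat 1 - P)"
      using comm s by (simp add: matrix_mult.diff_left matrix_mult.diff_right)
    then have "(mat 1 - P) ** (mat (-\<i>) ** (H s ** U s) ** P) = mat (-\<i>) ** (H s ** Y s)"
      by (metis Y_def matrix_mul_assoc mult_mat_left_commute)
    ultimately show ?thesis by simp
  qed
  then have "cadj (Y t) ** Y t = cadj (Y 0) ** Y 0"
    using herm t by (intro cadj_mult_solutions_constant) auto
  moreover have "Y 0 = 0"
    using ev idem by (simp add: Y_def evolution_def matrix_mult.diff_left)
  ultimately have "cadj (Y t) ** Y t = 0"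
    by simp
  then have "Y t = 0"
    by (rule cadj_mult_self_eq_0)
  then show ?thesis
    by (simp add: Y_def matrix_mult.diff_left)
qed

lemma has_vector_derivative_interaction_correction:
  fixes U1 U2 H1 H2 :: "real \<Rightarrow> 'n::finite cmat" and X :: "'n cmat"
    and M R :: "'k \<Rightarrow> 'n cmat" and \<omega> :: "'k \<Rightarrow> real"
  assumes d1: "(U1 has_vector_derivative mat (-\<i>) ** (H1 t ** U1 t)) (at t within S)"
    and d2: "(U2 has_vector_derivative mat (-\<i>) ** (H2 t ** U2 t)) (at t within S)"
    and herm: "hermitian (H1 t)"
    and split: "(H1 t - H2 t) ** (U2 t ** X) = (\<Sum>k\<in>K. M k ** (U2 t ** X))"
    and intertwine: "\<And>k. k \<in> K \<Longrightarrow> H1 t ** M k - M k ** H2 t = \<omega> k *\<^sub>R M k + R k"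
    and gap: "\<And>k. k \<in> K \<Longrightarrow> \<omega> k \<noteq> 0"
  shows "((\<lambda>s. cadj (U1 s) ** (U2 s ** X) - (\<Sum>k\<in>K. (1 / \<omega> k) *\<^sub>R (cadj (U1 s) ** (M k ** (U2 s ** X)))))
      has_vector_derivative - (mat \<i> ** (cadj (U1 t) ** (\<Sum>k\<in>K. (1 / \<omega> k) *\<^sub>R (R k ** (U2 t ** X))))))
      (at t within S)"
proof -
  define G where "G Y = mat \<i> ** (cadj (U1 t) ** Y)" for Y :: "'n cmat"
  interpret G: bounded_linear G
    unfolding G_def
    using bounded_linear_compose[OF matrix_mult.bounded_linear_right matrix_mult.bounded_linear_right] .
  define V where "V = U2 t ** X"
  have dD: "((\<lambda>s. cadj (U1 s) ** (C ** (U2 s ** X))) has_vector_derivative G ((H1 t ** C - C ** H2 t) ** V))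
      (at t within S)" for C
    unfolding G_def V_def using d1 d2 herm by (rule has_vector_derivative_evolution_sandwich)
  have "((\<lambda>s. cadj (U1 s) ** (U2 s ** X)) has_vector_derivative G ((H1 t - H2 t) ** V)) (at t within S)"
    using dD[of "mat 1"] by simp
  then have "((\<lambda>s. cadj (U1 s) ** (U2 s ** X) - (\<Sum>k\<in>K. (1 / \<omega> k) *\<^sub>R (cadj (U1 s) ** (M k ** (U2 s ** X)))))
      has_vector_derivative G ((H1 t - H2 t) ** V)
        - (\<Sum>k\<in>K. (1 / \<omega> k) *\<^sub>R G ((H1 t ** M k - M k ** H2 t) ** V))) (at t within S)"
    by (intro has_vector_derivative_diff has_vector_derivative_sum dD
        bounded_linear.has_vector_derivative[OF bounded_linear_scaleR_right])
  moreover have "(1 / \<omega> k) *\<^sub>R G ((H1 t ** M k - M k ** H2 t) ** V)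
      = G (M k ** V) + (1 / \<omega> k) *\<^sub>R G (R k ** V)" if "k \<in> K" for k
    using gap[OF that]
    by (simp add: intertwine[OF that] matrix_mult.add_left matrix_mult.scaleR_left G.add G.scaleR
        scaleR_add_right)
  ultimately show ?thesis
    using split
    by (simp add: G_def V_def sum.distrib matrix_mult.sum_left matrix_mult.sum_right
        matrix_mult.scaleR_left matrix_mult.scaleR_right)
qed

lemma evolution_comparison_bound:
  fixes H1 H2 U1 U2 :: "real \<Rightarrow> 'n::finite cmat" and X :: "'n cmat"
    and M :: "'k \<Rightarrow> 'n cmat" and R :: "'k \<Rightarrow> real \<Rightarrow> 'n cmat" and \<omega> r :: "'k \<Rightarrow> real"
  assumes T: "0 \<le> T"
    and ev1: "evolution T H1 U1" and ev2: "evolution T H2 U2"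
    and herm1: "\<forall>t\<in>{0..T}. hermitian (H1 t)" and herm2: "\<forall>t\<in>{0..T}. hermitian (H2 t)"
    and split: "\<And>t. t \<in> {0..T} \<Longrightarrow> (H1 t - H2 t) ** (U2 t ** X) = (\<Sum>k\<in>K. M k ** (U2 t ** X))"
    and intertwine: "\<And>k t. k \<in> K \<Longrightarrow> t \<in> {0..T} \<Longrightarrow> H1 t ** M k - M k ** H2 t = \<omega> k *\<^sub>R M k + R k t"
    and gap: "\<And>k. k \<in> K \<Longrightarrow> \<omega> k \<noteq> 0"
    and remainder: "\<And>k t. k \<in> K \<Longrightarrow> t \<in> {0..T} \<Longrightarrow> norm (R k t) \<le> r k"
  shows "norm (cadj (U1 T) ** (U2 T ** X) - X) \<le> (\<Sum>k\<in>K. (T * r k + 2 * norm (M k)) / \<bar>\<omega> k\<bar>) * norm X"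
proof -
  define S where "S s = (\<Sum>k\<in>K. (1 / \<omega> k) *\<^sub>R (cadj (U1 s) ** (M k ** (U2 s ** X))))" for s
  define \<Phi> where "\<Phi> s = cadj (U1 s) ** (U2 s ** X) - S s" for s
  \<comment> \<open>As \<open>\<omega> k *\<^sub>R M k = H1 ** M k - M k ** H2 - R k\<close>, subtracting \<open>S\<close> leaves only the
    remainders \<open>R k\<close> in the derivative of \<open>\<Phi>\<close>.\<close>
  have U1: "U1 t ** cadj (U1 t) = mat 1" and U2: "cadj (U2 t) ** U2 t = mat 1" if "t \<in> {0..T}" for t
    using evolution_unitary[OF ev1 herm1 that] evolution_unitary[OF ev2 herm2 that] by (simp_all add: unitary_def)
  have norm_sandwich: "norm (cadj (U1 s) ** (C ** (U2 s ** X))) \<le> norm C * norm X" if "s \<in> {0..T}" for C s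
    using norm_matrix_mult_le[of C "U2 s ** X"]
    by (simp add: norm_cadj_unitary_mult[OF U1[OF that]] norm_unitary_mult[OF U2[OF that]])
  have norm_S: "norm (S s) \<le> (\<Sum>k\<in>K. norm (M k) * norm X / \<bar>\<omega> k\<bar>)" if "s \<in> {0..T}" for s
    unfolding S_def by (intro norm_sum_scaleR_inverse_le norm_sandwich that)
  have d\<Phi>: "(\<Phi> has_vector_derivative
      - (mat \<i> ** (cadj (U1 t) ** (\<Sum>k\<in>K. (1 / \<omega> k) *\<^sub>R (R k t ** (U2 t ** X)))))) (at t within {0..T})"
    if t: "t \<in> {0..T}" for t
  proof -
    have "(U1 has_vector_derivative mat (-\<i>) ** (H1 t ** U1 t)) (at t within {0..T})"
      using ev1 t by (simp add: evolution_def)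
    moreover have "(U2 has_vector_derivative mat (-\<i>) ** (H2 t ** U2 t)) (at t within {0..T})"
      using ev2 t by (simp add: evolution_def)
    ultimately show ?thesis
      unfolding \<Phi>_def S_def
      using herm1[rule_format, OF t] split[OF t] intertwine[OF _ t] gap
      by (rule has_vector_derivative_interaction_correction)
  qed
  have norm_d\<Phi>: "norm (- (mat \<i> ** (cadj (U1 t) ** (\<Sum>k\<in>K. (1 / \<omega> k) *\<^sub>R (R k t ** (U2 t ** X))))))
      \<le> (\<Sum>k\<in>K. r k * norm X / \<bar>\<omega> k\<bar>)" if t: "t \<in> {0..T}" for t
    unfolding norm_minus_cancel norm_mat_i_mult norm_cadj_unitary_mult[OF U1[OF t]]
  proof (rule norm_sum_scaleR_inverse_le)
    fix k assume k: "k \<in> K"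
    have "norm (R k t ** (U2 t ** X)) \<le> norm (R k t) * norm X"
      using norm_matrix_mult_le[of "R k t" "U2 t ** X"] by (simp add: norm_unitary_mult[OF U2[OF t]])
    also have "\<dots> \<le> r k * norm X"
      by (intro mult_right_mono remainder k t) simp
    finally show "norm (R k t ** (U2 t ** X)) \<le> r k * norm X" .
  qed
  have decomposition: "cadj (U1 T) ** (U2 T ** X) - X = (\<Phi> T - \<Phi> 0) + S T - S 0"
    using ev1 ev2 by (simp add: \<Phi>_def evolution_def cadj_mat)
  have "norm (cadj (U1 T) ** (U2 T ** X) - X) \<le> norm (\<Phi> T - \<Phi> 0) + norm (S T) + norm (S 0)"
    unfolding decomposition by (rule order_trans[OF norm_triangle_ineq4 add_right_mono[OF norm_triangle_ineq]])
  also have "\<dots> \<le> (\<Sum>k\<in>K. r k * norm X / \<bar>\<omega> k\<bar>) * (T - 0)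
      + (\<Sum>k\<in>K. norm (M k) * norm X / \<bar>\<omega> k\<bar>) + (\<Sum>k\<in>K. norm (M k) * norm X / \<bar>\<omega> k\<bar>)"
    using norm_diff_le_of_vector_derivative[OF T d\<Phi> norm_d\<Phi>] norm_S[of T] norm_S[of 0] T
    by (intro add_mono) auto
  also have "\<dots> = (\<Sum>k\<in>K. (T * r k + 2 * norm (M k)) / \<bar>\<omega> k\<bar> * norm X)"
    unfolding sum_distrib_right sum.distrib[symmetric]
    by (rule sum.cong) (simp_all add: add_divide_distrib algebra_simps)
  also have "\<dots> = (\<Sum>k\<in>K. (T * r k + 2 * norm (M k)) / \<bar>\<omega> k\<bar>) * norm X"
    by (rule sum_distrib_right[symmetric])
  finally show ?thesis .
qed

section \<open>Spectral resolutions and pinching\<close>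

locale spectral_resolution =
  fixes Q :: "real \<Rightarrow> 'n::finite cmat" and \<Lambda> :: "real set"
  assumes finite_spectrum: "finite \<Lambda>"
    and hermitian_Q: "\<forall>a\<in>\<Lambda>. hermitian (Q a)"
    and Q_mult_Q: "\<forall>a\<in>\<Lambda>. \<forall>b\<in>\<Lambda>. Q a ** Q b = (if a = b then Q a else 0)"
    and sum_Q: "(\<Sum>a\<in>\<Lambda>. Q a) = mat 1"
begin

definition spectral_op :: "'n cmat" where
  "spectral_op = (\<Sum>a\<in>\<Lambda>. mat (of_real a) ** Q a)"

definition proj :: "real set \<Rightarrow> 'n cmat" where
  "proj I = (\<Sum>a\<in>I. Q a)"

definition pinch :: "real set \<Rightarrow> 'n cmat \<Rightarrow> 'n cmat" where
  "pinch I V = (\<Sum>a\<in>I. Q a ** V ** Q a)"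

lemma Q_mult_sum:
  fixes Y :: "real \<Rightarrow> 'n cmat"
  assumes "a \<in> \<Lambda>" and "S \<subseteq> \<Lambda>"
  shows "Q a ** (\<Sum>b\<in>S. Q b ** Y b) = (if a \<in> S then Q a ** Y a else 0)"
proof -
  have "Q a ** (\<Sum>b\<in>S. Q b ** Y b) = (\<Sum>b\<in>S. if a = b then Q a ** Y a else 0)"
    unfolding matrix_mult.sum_right
    by (rule sum.cong) (use Q_mult_Q assms in \<open>auto simp: matrix_mul_assoc\<close>)
  moreover have "finite S"
    using assms(2) finite_spectrum finite_subset by blast
  ultimately show ?thesis by simp
qed

lemma sum_mult_Q:
  fixes Y :: "real \<Rightarrow> 'n cmat"
  assumes "a \<in> \<Lambda>" and "S \<subseteq> \<Lambda>"
  shows "(\<Sum>b\<in>S. Y b ** Q b) ** Q a = (if a \<in> S then Y a ** Q a else 0)"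
proof -
  have "(\<Sum>b\<in>S. Y b ** Q b) ** Q a = (\<Sum>b\<in>S. if a = b then Y a ** Q a else 0)"
    unfolding matrix_mult.sum_left
    by (rule sum.cong) (use Q_mult_Q assms in \<open>auto simp: matrix_mul_assoc[symmetric]\<close>)
  moreover have "finite S"
    using assms(2) finite_spectrum finite_subset by blast
  ultimately show ?thesis by simp
qed

lemma Q_mult_spectral_op: "a \<in> \<Lambda> \<Longrightarrow> Q a ** spectral_op = a *\<^sub>R Q a"
  unfolding spectral_op_def
  using Q_mult_sum[of a \<Lambda> "\<lambda>b. mat (of_real b)"] by (simp add: mult_mat_commute scaleR_eq_mat_mult)

lemma spectral_op_mult_Q: "a \<in> \<Lambda> \<Longrightarrow> spectral_op ** Q a = a *\<^sub>R Q a"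
  unfolding spectral_op_def
  using sum_mult_Q[of a \<Lambda> "\<lambda>b. mat (of_real b)"] by (simp add: scaleR_eq_mat_mult)

lemma hermitian_spectral_op: "hermitian spectral_op"
  using hermitian_Q
  by (simp add: hermitian_def spectral_op_def cadj_sum cadj_mult cadj_mat mult_mat_commute)

lemma proj_mult_Q: "a \<in> \<Lambda> \<Longrightarrow> I \<subseteq> \<Lambda> \<Longrightarrow> proj I ** Q a = (if a \<in> I then Q a else 0)"
  unfolding proj_def using sum_mult_Q[of a I "\<lambda>_. mat 1"] by simp

lemma Q_mult_proj: "a \<in> \<Lambda> \<Longrightarrow> I \<subseteq> \<Lambda> \<Longrightarrow> Q a ** proj I = (if a \<in> I then Q a else 0)"
  unfolding proj_def using Q_mult_sum[of a I "\<lambda>_. mat 1"] by simp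

lemma proj_idem:
  assumes "I \<subseteq> \<Lambda>"
  shows "proj I ** proj I = proj I"
proof -
  have "proj I ** proj I = (\<Sum>a\<in>I. proj I ** Q a)"
    by (simp add: proj_def[of I] matrix_mult.sum_right)
  also have "\<dots> = (\<Sum>a\<in>I. Q a)"
    by (rule sum.cong) (use assms in \<open>auto simp: proj_mult_Q subset_iff\<close>)
  finally show ?thesis
    by (simp add: proj_def)
qed

lemma proj_commute_spectral_op: "I \<subseteq> \<Lambda> \<Longrightarrow> proj I ** spectral_op = spectral_op ** proj I"
  unfolding proj_def matrix_mult.sum_left matrix_mult.sum_right
  by (rule sum.cong) (auto simp: Q_mult_spectral_op spectral_op_mult_Q)

lemma proj_mult_pinch: "I \<subseteq> \<Lambda> \<Longrightarrow> proj I ** pinch I V = pinch I V"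
  unfolding pinch_def matrix_mult.sum_right
  by (rule sum.cong) (auto simp: matrix_mul_assoc proj_mult_Q subset_iff)

lemma pinch_mult_proj: "I \<subseteq> \<Lambda> \<Longrightarrow> pinch I V ** proj I = pinch I V"
  unfolding pinch_def matrix_mult.sum_left
  by (rule sum.cong) (auto simp: Q_mult_proj subset_iff simp flip: matrix_mul_assoc)

lemma hermitian_pinch: "I \<subseteq> \<Lambda> \<Longrightarrow> hermitian V \<Longrightarrow> hermitian (pinch I V)"
  using hermitian_Q
  by (auto simp: hermitian_def pinch_def cadj_sum cadj_mult matrix_mul_assoc intro!: sum.cong)

lemma pinch_defect_mult_proj:
  assumes "I \<subseteq> \<Lambda>"
  shows "(V - pinch I V) ** proj I = (\<Sum>k\<in>Sigma I (\<lambda>a. \<Lambda> - {a}). Q (snd k) ** V ** Q (fst k))"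
proof -
  have block_row: "(\<Sum>b\<in>\<Lambda>-{a}. Q b ** V ** Q a) = V ** Q a - Q a ** V ** Q a" if "a \<in> \<Lambda>" for a
  proof -
    have "V ** Q a = (\<Sum>b\<in>\<Lambda>. Q b) ** (V ** Q a)"
      by (simp add: sum_Q)
    also have "\<dots> = (\<Sum>b\<in>\<Lambda>. Q b ** V ** Q a)"
      by (simp add: matrix_mult.sum_left matrix_mul_assoc)
    also have "\<dots> = Q a ** V ** Q a + (\<Sum>b\<in>\<Lambda>-{a}. Q b ** V ** Q a)"
      by (rule sum.remove[OF finite_spectrum that])
    finally show ?thesis by simp
  qed
  have "finite I"
    using assms finite_spectrum finite_subset by blast
  then have "(\<Sum>k\<in>Sigma I (\<lambda>a. \<Lambda> - {a}). Q (snd k) ** V ** Q (fst k))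
      = (\<Sum>a\<in>I. \<Sum>b\<in>\<Lambda>-{a}. Q b ** V ** Q a)"
    by (subst sum.Sigma) (auto simp: finite_spectrum split_def)
  also have "\<dots> = (\<Sum>a\<in>I. V ** Q a - Q a ** V ** Q a)"
    using assms block_row by (intro sum.cong) auto
  also have "\<dots> = (V - pinch I V) ** proj I"
    using pinch_mult_proj[OF assms]
    by (simp add: sum_subtractf pinch_def proj_def matrix_mult.sum_right matrix_mult.diff_left)
  finally show ?thesis ..
qed

lemma spectral_op_mult_block: "a \<in> \<Lambda> \<Longrightarrow> b \<in> \<Lambda> \<Longrightarrow> spectral_op ** (Q b ** V ** Q a) = b *\<^sub>R (Q b ** V ** Q a)"
  by (simp add: matrix_mul_assoc spectral_op_mult_Q matrix_mult.scaleR_left)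

lemma block_mult_spectral_op: "a \<in> \<Lambda> \<Longrightarrow> b \<in> \<Lambda> \<Longrightarrow> (Q b ** V ** Q a) ** spectral_op = a *\<^sub>R (Q b ** V ** Q a)"
  by (simp add: Q_mult_spectral_op matrix_mult.scaleR_right flip: matrix_mul_assoc)

lemma pinched_hamiltonian_commute_proj:
  assumes "I \<subseteq> \<Lambda>" and "K ** proj I = proj I ** K"
  shows "(K + E *\<^sub>R spectral_op + pinch I V) ** proj I = proj I ** (K + E *\<^sub>R spectral_op + pinch I V)"
  using assms
  by (simp add: matrix_mult.add_left matrix_mult.add_right matrix_mult.scaleR_left matrix_mult.scaleR_right
      proj_commute_spectral_op proj_mult_pinch pinch_mult_proj)

lemma norm_evolution_pinching_le:
  fixes K :: "real \<Rightarrow> 'n::finite cmat" and V :: "'n cmat" and UV UW :: "real \<Rightarrow> 'n cmat"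
  assumes T: "0 \<le> T" and E: "E > 0"
    and K_herm: "\<forall>t\<in>{0..T}. hermitian (K t)" and K_bound: "\<forall>t\<in>{0..T}. norm (K t) \<le> \<kappa>"
    and V_herm: "hermitian V" and I: "I \<subseteq> \<Lambda>"
    and K_proj: "\<forall>t\<in>{0..T}. K t ** proj I = proj I ** K t"
    and UV: "evolution T (\<lambda>t. K t + E *\<^sub>R spectral_op + V) UV"
    and UW: "evolution T (\<lambda>t. K t + E *\<^sub>R spectral_op + pinch I V) UW"
  shows "norm (UV T ** proj I - UW T ** proj I)
    \<le> (\<Sum>k\<in>Sigma I (\<lambda>a. \<Lambda> - {a}). (T * (2 * \<kappa> + norm V + norm (pinch I V)) + 2)
          * norm (Q (snd k) ** V ** Q (fst k)) / \<bar>snd k - fst k\<bar>) * norm (proj I) / E"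
proof -
  define P where "P = proj I"
  define W where "W = pinch I V"
  define Pairs where "Pairs = Sigma I (\<lambda>a. \<Lambda> - {a})"
  define M where "M k = Q (snd k) ** V ** Q (fst k)" for k :: "real \<times> real"
  define HV where "HV t = K t + E *\<^sub>R spectral_op + V" for t
  define HW where "HW t = K t + E *\<^sub>R spectral_op + W" for t
  have Pairs: "fst k \<in> \<Lambda>" "snd k \<in> \<Lambda>" "snd k \<noteq> fst k" if "k \<in> Pairs" for k
    using that I by (auto simp: Pairs_def)
  have evV: "evolution T HV UV"
    unfolding HV_def using UV .
  have evW: "evolution T HW UW"
    unfolding HW_def W_def using UW .
  have hermV: "\<forall>t\<in>{0..T}. hermitian (HV t)" and hermW: "\<forall>t\<in>{0..T}. hermitian (HW t)"
    using K_herm V_herm hermitian_pinch[OF I V_herm]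
    by (simp_all add: HV_def HW_def W_def hermitian_add hermitian_scaleR hermitian_spectral_op)
  have invariant: "P ** (UW t ** P) = UW t ** P" if "t \<in> {0..T}" for t
    unfolding P_def
    using evolution_commuting_projection[OF evW hermW _ proj_idem[OF I] that] K_proj
    by (simp add: HW_def W_def pinched_hamiltonian_commute_proj[OF I])
  have "norm (cadj (UV T) ** (UW T ** P) - P)
      \<le> (\<Sum>k\<in>Pairs. (T * ((2 * \<kappa> + norm V + norm W) * norm (M k)) + 2 * norm (M k)) / \<bar>E * (snd k - fst k)\<bar>)
         * norm P"
  proof (rule evolution_comparison_bound[OF T evV evW hermV hermW])
    fix t assume t: "t \<in> {0..T}"
    have "(HV t - HW t) ** (UW t ** P) = ((V - W) ** P) ** (UW t ** P)"
      by (simp add: HV_def HW_def invariant[OF t] flip: matrix_mul_assoc)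
    then show "(HV t - HW t) ** (UW t ** P) = (\<Sum>k\<in>Pairs. M k ** (UW t ** P))"
      by (simp add: P_def W_def Pairs_def M_def pinch_defect_mult_proj[OF I] matrix_mult.sum_left)
  next
    fix k t assume "k \<in> Pairs"
    then show "HV t ** M k - M k ** HW t
        = (E * (snd k - fst k)) *\<^sub>R M k + ((K t + V) ** M k - M k ** (K t + W))"
      unfolding HV_def HW_def M_def
      by (intro mult_diff_mult_eigen_shift spectral_op_mult_block block_mult_spectral_op Pairs)
  next
    fix k assume "k \<in> Pairs"
    with E show "E * (snd k - fst k) \<noteq> 0"
      by (simp add: Pairs(3))
  next
    fix k t assume t: "t \<in> {0..T}"
    have "norm ((K t + V) ** M k - M k ** (K t + W)) \<le> (norm (K t + V) + norm (K t + W)) * norm (M k)"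
      by (rule norm_commutator_le)
    also have "\<dots> \<le> (2 * \<kappa> + norm V + norm W) * norm (M k)"
      using K_bound t norm_triangle_ineq[of "K t" V] norm_triangle_ineq[of "K t" W]
      by (intro mult_right_mono) force+
    finally show "norm ((K t + V) ** M k - M k ** (K t + W)) \<le> (2 * \<kappa> + norm V + norm W) * norm (M k)" .
  qed
  also have "\<dots> = (\<Sum>k\<in>Pairs. (T * (2 * \<kappa> + norm V + norm W) + 2) * norm (M k) / \<bar>snd k - fst k\<bar>) * norm P / E"
  proof -
    have "(T * (c * m) + 2 * m) / \<bar>E * d\<bar> * p = (T * c + 2) * m / \<bar>d\<bar> * p / E" for c m d p :: real
      using E by (simp add: abs_mult algebra_simps)
    then show ?thesis
      unfolding sum_divide_distrib sum_distrib_right by (intro sum.cong) simp_all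
  qed
  finally have bound: "norm (P - cadj (UV T) ** (UW T ** P))
      \<le> (\<Sum>k\<in>Pairs. (T * (2 * \<kappa> + norm V + norm W) + 2) * norm (M k) / \<bar>snd k - fst k\<bar>) * norm P / E"
    by (simp add: norm_minus_commute)
  have "unitary (UV T)"
    using evolution_unitary[OF evV hermV] T by simp
  then show ?thesis
    using bound by (simp add: norm_unitary_mult_diff P_def W_def Pairs_def M_def)
qed

lemma evolution_pinching_tendsto:
  fixes K :: "real \<Rightarrow> 'n::finite cmat" and V :: "'n cmat" and UV UW :: "real \<Rightarrow> real \<Rightarrow> 'n cmat"
  assumes T: "0 \<le> T" and K_cont: "continuous_on {0..T} K" and K_herm: "\<forall>t\<in>{0..T}. hermitian (K t)"
    and V_herm: "hermitian V" and I: "I \<subseteq> \<Lambda>"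
    and K_proj: "\<forall>t\<in>{0..T}. K t ** proj I = proj I ** K t"
    and UV: "\<forall>E>0. evolution T (\<lambda>t. K t + E *\<^sub>R spectral_op + V) (UV E)"
    and UW: "\<forall>E>0. evolution T (\<lambda>t. K t + E *\<^sub>R spectral_op + pinch I V) (UW E)"
  shows "((\<lambda>E. norm (UV E T ** proj I - UW E T ** proj I)) \<longlongrightarrow> 0) at_top"
proof -
  obtain \<kappa> where \<kappa>: "\<forall>t\<in>{0..T}. norm (K t) \<le> \<kappa>"
    using compact_imp_bounded[OF compact_continuous_image[OF K_cont compact_Icc]]
    unfolding bounded_iff by blast
  define C where "C = (\<Sum>k\<in>Sigma I (\<lambda>a. \<Lambda> - {a}). (T * (2 * \<kappa> + norm V + norm (pinch I V)) + 2)
      * norm (Q (snd k) ** V ** Q (fst k)) / \<bar>snd k - fst k\<bar>) * norm (proj I)"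
  show ?thesis
  proof (rule tendsto_sandwich[OF _ _ tendsto_const])
    show "\<forall>\<^sub>F E in at_top. norm (UV E T ** proj I - UW E T ** proj I) \<le> C / E"
      using eventually_gt_at_top[of 0]
    proof eventually_elim
      case (elim E)
      show ?case
        unfolding C_def
        by (rule norm_evolution_pinching_le[OF T elim K_herm \<kappa> V_herm I K_proj UV[rule_format, OF elim]
              UW[rule_format, OF elim]])
    qed
    show "((\<lambda>E. C / E) \<longlongrightarrow> 0) at_top"
      by (rule tendsto_divide_0[OF tendsto_const filterlim_at_top_imp_at_infinity[OF filterlim_ident]])
  qed simp
qed

end

section \<open>Unitarily invariant norms\<close>

definition matrix_unit :: "'n::finite \<Rightarrow> 'n \<Rightarrow> 'n cmat" where
  "matrix_unit i j = (\<chi> k l. if k = i \<and> l = j then 1 else 0)"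

lemma cmat_eq_sum_matrix_unit: "X = (\<Sum>i\<in>UNIV. \<Sum>j\<in>UNIV. mat (X $ i $ j) ** matrix_unit i j)"
proof -
  have row: "(\<Sum>j\<in>UNIV. if k = i \<and> l = j then X $ i $ j else 0) = (if k = i then X $ i $ l else 0)"
    for i k l
    by (cases "k = i") auto
  show ?thesis
    by (simp add: vec_eq_iff mat_mult_eq matrix_unit_def if_distrib if_distribR row cong: if_cong)
qed

context
  fixes N :: "'n::finite cmat \<Rightarrow> real"
  assumes N: "unitarily_invariant_norm N"
begin

lemma unitarily_invariant_norm_triangle: "N (X + Y) \<le> N X + N Y"
  using N by (simp add: unitarily_invariant_norm_def)

lemma unitarily_invariant_norm_mat_mult: "N (mat c ** X) = cmod c * N X"
  using N by (simp add: unitarily_invariant_norm_def)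

lemma unitarily_invariant_norm_zero: "N 0 = 0"
  using N by (simp add: unitarily_invariant_norm_def)

lemma unitarily_invariant_norm_nonneg: "0 \<le> N X"
proof -
  have "N 0 \<le> N X + N (mat (-1) ** X)"
    using unitarily_invariant_norm_triangle[of X "mat (-1) ** X"] by (simp add: mat_uminus_mult)
  then show ?thesis
    by (simp add: unitarily_invariant_norm_zero unitarily_invariant_norm_mat_mult)
qed

lemma unitarily_invariant_norm_sum_le: "N (\<Sum>x\<in>S. f x) \<le> (\<Sum>x\<in>S. N (f x))"
  by (induction S rule: infinite_finite_induct)
    (auto simp: unitarily_invariant_norm_zero intro: order_trans[OF unitarily_invariant_norm_triangle])

lemma unitarily_invariant_norm_le_norm: "\<exists>c. \<forall>X. N X \<le> c * norm X"
proof (intro exI allI)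
  fix X :: "'n cmat"
  have "N X \<le> (\<Sum>i\<in>UNIV. \<Sum>j\<in>UNIV. N (mat (X $ i $ j) ** matrix_unit i j))"
    by (subst cmat_eq_sum_matrix_unit)
      (intro order_trans[OF unitarily_invariant_norm_sum_le] sum_mono unitarily_invariant_norm_sum_le)
  also have "\<dots> \<le> (\<Sum>i\<in>UNIV. \<Sum>j\<in>UNIV. norm X * N (matrix_unit i j))"
  proof (intro sum_mono)
    fix i j
    have "cmod (X $ i $ j) \<le> norm X"
      using Finite_Cartesian_Product.norm_nth_le[of "X $ i" j] Finite_Cartesian_Product.norm_nth_le[of X i]
      by linarith
    then show "N (mat (X $ i $ j) ** matrix_unit i j) \<le> norm X * N (matrix_unit i j)"
      by (simp add: unitarily_invariant_norm_mat_mult unitarily_invariant_norm_nonneg mult_right_mono)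
  qed
  also have "\<dots> = (\<Sum>i\<in>UNIV. \<Sum>j\<in>UNIV. N (matrix_unit i j)) * norm X"
    by (simp add: sum_distrib_left sum_distrib_right mult.commute)
  finally show "N X \<le> (\<Sum>i\<in>UNIV. \<Sum>j\<in>UNIV. N (matrix_unit i j)) * norm X" .
qed

lemma tendsto_unitarily_invariant_norm_zero:
  assumes "((\<lambda>x. norm (f x)) \<longlongrightarrow> 0) F"
  shows "((\<lambda>x. N (f x)) \<longlongrightarrow> 0) F"
proof -
  obtain c where c: "\<And>X. N X \<le> c * norm X"
    using unitarily_invariant_norm_le_norm by blast
  show ?thesis
    by (rule tendsto_sandwich[OF _ _ tendsto_const tendsto_mult_right_zero[OF assms, of c]])
      (simp_all add: unitarily_invariant_norm_nonneg c)
qed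

end

section \<open>Tensor products\<close>

lemma kron_mult: "kron A B ** kron C D = kron (A ** C) (B ** D)"
  for A C :: "'s::finite cmat" and B D :: "'b::finite cmat"
proof -
  have pairs: "(\<Sum>k\<in>UNIV. f k) = (\<Sum>i\<in>UNIV. \<Sum>j\<in>UNIV. f (i, j))" for f :: "'s \<times> 'b \<Rightarrow> complex"
    by (subst UNIV_Times_UNIV[symmetric]) (rule sum.cartesian_product')
  show ?thesis
    by (simp add: vec_eq_iff kron_def matrix_matrix_mult_def pairs sum_product mult_ac) (intro allI sum.swap)
qed

lemma kron_add_left: "kron (A + B) C = kron A C + kron B C"
  for A B :: "'s::finite cmat" and C :: "'b::finite cmat"
  by (simp add: vec_eq_iff kron_def algebra_simps)

lemma kron_scaleR_left: "kron (r *\<^sub>R A) B = r *\<^sub>R kron A B"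
  for A :: "'s::finite cmat" and B :: "'b::finite cmat"
  by (simp add: vec_eq_iff kron_def scaleR_conv_of_real[where 'a=complex])

lemma cadj_kron: "cadj (kron A B) = kron (cadj A) (cadj B)"
  for A :: "'s::finite cmat" and B :: "'b::finite cmat"
  by (simp add: vec_eq_iff kron_def cadj_def)

lemma kron_one: "kron (mat 1 :: 's::finite cmat) (mat 1 :: 'b::finite cmat) = mat 1"
  by (simp add: vec_eq_iff kron_def mat_def prod_eq_iff)

lemma linear_liftS: "linear (liftS :: 's::finite cmat \<Rightarrow> ('s \<times> 'b::finite) cmat)"
  by (rule linearI) (simp_all add: liftS_def kron_add_left kron_scaleR_left)

lemma bounded_linear_liftS: "bounded_linear (liftS :: 's::finite cmat \<Rightarrow> ('s \<times> 'b::finite) cmat)"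
  using linear_liftS linear_conv_bounded_linear by blast

lemma liftS_mult: "liftS A ** liftS B = (liftS (A ** B) :: ('s::finite \<times> 'b::finite) cmat)"
  by (simp add: liftS_def kron_mult)

lemma liftS_liftB_commute: "liftS A ** liftB B = liftB B ** (liftS A :: ('s::finite \<times> 'b::finite) cmat)"
  by (simp add: liftS_def liftB_def kron_mult)

lemma liftS_mat_mult: "liftS (mat c ** A) = mat c ** (liftS A :: ('s::finite \<times> 'b::finite) cmat)"
  by (simp add: liftS_def vec_eq_iff kron_def mat_mult_eq)

lemma liftS_one: "liftS (mat 1) = (mat 1 :: ('s::finite \<times> 'b::finite) cmat)"
  by (simp add: liftS_def kron_one)

lemma hermitian_liftS: "hermitian A \<Longrightarrow> hermitian (liftS A :: ('s::finite \<times> 'b::finite) cmat)"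
  by (simp add: hermitian_def liftS_def cadj_kron cadj_mat)

lemma hermitian_liftB: "hermitian B \<Longrightarrow> hermitian (liftB B :: ('s::finite \<times> 'b::finite) cmat)"
  by (simp add: hermitian_def liftB_def cadj_kron cadj_mat)

theorem theorem2:
  fixes T :: real
    and HS :: "real \<Rightarrow> 's::finite cmat"
    and HB :: "'b::finite cmat"
    and Hp :: "'s cmat"
    and \<Lambda> :: "real set" and Pr :: "real \<Rightarrow> 's cmat"
    and V :: "('s \<times> 'b) cmat"
    and \<I> :: "real set"
    and UV UW :: "real \<Rightarrow> real \<Rightarrow> ('s \<times> 'b) cmat"
    and N :: "('s \<times> 'b) cmat \<Rightarrow> real"
  assumes T_pos: "T > 0"
    and HS_cont: "continuous_on {0..T} HS"
    and HS_herm: "\<forall>t\<in>{0..T}. hermitian (HS t)"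
    and HB_herm: "hermitian HB"
    and Hp_herm: "hermitian Hp"
    and \<Lambda>_fin: "finite \<Lambda>"
    and Pr_herm: "\<forall>a\<in>\<Lambda>. hermitian (Pr a)"
    and Pr_orth: "\<forall>a\<in>\<Lambda>. \<forall>b\<in>\<Lambda>. Pr a ** Pr b = (if a = b then Pr a else 0)"
    and Pr_nonzero: "\<forall>a\<in>\<Lambda>. Pr a \<noteq> 0"
    and Pr_complete: "(\<Sum>a\<in>\<Lambda>. Pr a) = mat 1"
    and Hp_spec: "Hp = (\<Sum>a\<in>\<Lambda>. mat (complex_of_real a) ** Pr a)"
    and V_herm: "hermitian V"
    and \<I>_sub: "\<I> \<subseteq> \<Lambda>"
    and comm_P: "\<forall>t\<in>{0..T}. commute (HS t) (\<Sum>a\<in>\<I>. Pr a)"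
    and comm_Hp: "\<forall>t\<in>{0..T}. commute (HS t) Hp"
    and UV_evol: "\<forall>E>0. evolution T
        (\<lambda>t. liftS (HS t) + liftB HB + E *\<^sub>R liftS Hp + V) (UV E)"
    and UW_evol: "\<forall>E>0. evolution T
        (\<lambda>t. liftS (HS t) + liftB HB + E *\<^sub>R liftS Hp
              + (\<Sum>a\<in>\<I>. liftS (Pr a) ** V ** liftS (Pr a))) (UW E)"
    and N_ui: "unitarily_invariant_norm N"
  shows "((\<lambda>E. N (UV E T ** liftS (\<Sum>a\<in>\<I>. Pr a) - UW E T ** liftS (\<Sum>a\<in>\<I>. Pr a)))
           \<longlongrightarrow> 0) at_top"
proof -
  define Q where "Q a = (liftS (Pr a) :: ('s \<times> 'b) cmat)" for a
  define K where "K t = liftS (HS t) + liftB HB" for t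
  have liftS_sum: "liftS (\<Sum>a\<in>S. f a) = (\<Sum>a\<in>S. liftS (f a) :: ('s \<times> 'b) cmat)" for S and f :: "real \<Rightarrow> 's cmat"
    by (rule linear_sum[OF linear_liftS])
  interpret spectral_resolution Q \<Lambda>
    using \<Lambda>_fin Pr_herm Pr_orth Pr_complete
    by unfold_locales (auto simp: Q_def hermitian_liftS liftS_mult liftS_one linear_0[OF linear_liftS]
        simp flip: liftS_sum)
  have proj_eq: "proj \<I> = liftS (\<Sum>a\<in>\<I>. Pr a)"
    by (simp add: proj_def Q_def liftS_sum)
  have "((\<lambda>E. norm (UV E T ** proj \<I> - UW E T ** proj \<I>)) \<longlongrightarrow> 0) at_top"
  proof (rule evolution_pinching_tendsto[OF less_imp_le[OF T_pos] _ _ V_herm \<I>_sub])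
    show "continuous_on {0..T} K"
      unfolding K_def
      by (intro continuous_on_add continuous_on_const bounded_linear.continuous_on[OF bounded_linear_liftS HS_cont])
    show "\<forall>t\<in>{0..T}. hermitian (K t)"
      using HS_herm HB_herm by (simp add: K_def hermitian_add hermitian_liftS hermitian_liftB)
    show "\<forall>t\<in>{0..T}. K t ** proj \<I> = proj \<I> ** K t"
      using comm_P by (simp add: K_def proj_eq matrix_mult.add_left matrix_mult.add_right liftS_mult
          liftS_liftB_commute commute_def)
    have "spectral_op = liftS Hp"
      by (simp add: spectral_op_def Hp_spec liftS_sum Q_def liftS_mat_mult)
    then show "\<forall>E>0. evolution T (\<lambda>t. K t + E *\<^sub>R spectral_op + V) (UV E)"
      and "\<forall>E>0. evolution T (\<lambda>t. K t + E *\<^sub>R spectral_op + pinch \<I> V) (UW E)"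
      using UV_evol UW_evol by (simp_all add: K_def pinch_def Q_def)
  qed
  then show ?thesis
    unfolding proj_eq by (rule tendsto_unitarily_invariant_norm_zero[OF N_ui])
qed

end
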